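(* Let $D\in\{D_1,D_2,\dots,D_8\}$. For every integer $v\geq 15$ with $v\equiv 1\pmod{14}$, there exists a $D$-decomposition of $K^*_v$.
   Context: $K^*_v$ denotes the complete symmetric digraph of order $v$: it contains both arcs $(x,y)$ and $(y,x)$ for every pair of distinct vertices $x,y$. A $D$-decomposition of a digraph $K$ is a set of subdigraphs of $K$, each isomorphic to $D$, such that every arc of $K$ lies in exactly one of them. For distinct vertices $v_0,\dots,v_6$, the digraphs $D_i[v_0,v_1,\dots,v_6]$ ($i\in[1,8]$) all have vertex set $\{v_0,\dots,v_6\}$ and the following arc sets: $D_1$: $(v_1,v_0),(v_1,v_2),(v_2,v_3),(v_3,v_4),(v_4,v_5),(v_5,v_6),(v_6,v_0)$; $D_2$: $(v_1,v_0),(v_2,v_1),(v_2,v_3),(v_3,v_4),(v_4,v_5),(v_5,v_6),(v_6,v_0)$; $D_3$: $(v_1,v_0),(v_1,v_2),(v_3,v_2),(v_3,v_4),(v_4,v_5),(v_5,v_6),(v_6,v_0)$; $D_4$: $(v_1,v_0),(v_1,v_2),(v_2,v_3),(v_4,v_3),(v_4,v_5),(v_5,v_6),(v_6,v_0)$; $D_5$: $(v_1,v_0),(v_2,v_1),(v_3,v_2),(v_3,v_4),(v_4,v_5),(v_5,v_6),(v_6,v_0)$; $D_6$: $(v_1,v_0),(v_2,v_1),(v_2,v_3),(v_3,v_4),(v_5,v_4),(v_5,v_6),(v_6,v_0)$; $D_7$: $(v_1,v_0),(v_1,v_2),(v_3,v_2),(v_3,v_4),(v_4,v_5),(v_6,v_5),(v_6,v_0)$;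 $D_8$: $(v_1,v_0),(v_2,v_1),(v_2,v_3),(v_4,v_3),(v_4,v_5),(v_5,v_6),(v_6,v_0)$. $D_i$ also denotes the isomorphism type of $D_i[v_0,\dots,v_6]$. *)

theory Defs
  imports Main
begin

definition Kstar :: "'a set \<Rightarrow> ('a \<times> 'a) set" where
  "Kstar V = {(x, y). x \<in> V \<and> y \<in> V \<and> x \<noteq> y}"

definition Darcs :: "nat \<Rightarrow> 'a list \<Rightarrow> ('a \<times> 'a) set" where
  "Darcs i vs = (let w = (\<lambda>k. vs ! k) in
    (if i = 1 then {(w 1, w 0), (w 1, w 2), (w 2, w 3), (w 3, w 4), (w 4, w 5), (w 5, w 6), (w 6, w 0)}
     else if i = 2 then {(w 1, w 0), (w 2, w 1), (w 2, w 3), (w 3, w 4), (w 4, w 5), (w 5, w 6), (w 6, w 0)}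
     else if i = 3 then {(w 1, w 0), (w 1, w 2), (w 3, w 2), (w 3, w 4), (w 4, w 5), (w 5, w 6), (w 6, w 0)}
     else if i = 4 then {(w 1, w 0), (w 1, w 2), (w 2, w 3), (w 4, w 3), (w 4, w 5), (w 5, w 6), (w 6, w 0)}
     else if i = 5 then {(w 1, w 0), (w 2, w 1), (w 3, w 2), (w 3, w 4), (w 4, w 5), (w 5, w 6), (w 6, w 0)}
     else if i = 6 then {(w 1, w 0), (w 2, w 1), (w 2, w 3), (w 3, w 4), (w 5, w 4), (w 5, w 6), (w 6, w 0)}
     else if i = 7 then {(w 1, w 0), (w 1, w 2), (w 3, w 2), (w 3, w 4), (w 4, w 5), (w 6, w 5), (w 6, w 0)}
     else if i = 8 then {(w 1, w 0), (w 2, w 1), (w 2, w 3), (w 4, w 3), (w 4, w 5), (w 5, w 6), (w 6, w 0)}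
     else {}))"

(* A subdigraph B of K (given by its arc set) is isomorphic to D_i iff
   B = D_i[v0,...,v6] for some distinct vertices v0..v6 (D_i has no isolated vertices,
   so its vertex set is determined by its arcs). *)
definition is_copy :: "nat \<Rightarrow> ('a \<times> 'a) set \<Rightarrow> bool" where
  "is_copy i B \<longleftrightarrow> (\<exists>vs. length vs = 7 \<and> distinct vs \<and> B = Darcs i vs)"

definition is_decomposition :: "nat \<Rightarrow> ('a \<times> 'a) set \<Rightarrow> ('a \<times> 'a) set set \<Rightarrow> bool" where
  "is_decomposition i K \<D> \<longleftrightarrow>
     (\<forall>B\<in>\<D>. B \<subseteq> K \<and> is_copy i B) \<and> (\<forall>e\<in>K. \<exists>!B. B \<in> \<D> \<and> e \<in> B)"

end

theory Submission
  imports Defs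
begin

text \<open>Identify the vertices with \<open>\<int>\<^sub>v\<close>, \<open>v = 14k + 1\<close>. Every \<open>D\<^sub>i\<close> is an orientation of the
  7-cycle \<open>v\<^sub>0 v\<^sub>1 \<dots> v\<^sub>6 v\<^sub>0\<close>. Take \<open>k\<close> base 7-cycles in \<open>\<int>\<^sub>v\<close> whose \<open>7k\<close> edges have the
  differences \<open>\<plusminus>1, \<dots>, \<plusminus>7k\<close>, orient each of them as \<open>D\<^sub>i\<close>, and add its image under
  \<open>x \<mapsto> -x\<close>. The resulting \<open>14k = v - 1\<close> arcs have pairwise distinct differences, so
  they represent every nonzero difference exactly once, and the translates of these \<open>2k\<close>
  copies of \<open>D\<^sub>i\<close> cover every arc of \<open>K\<^sup>*\<^sub>v\<close> exactly once.\<close>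

definition Dpattern :: "nat \<Rightarrow> (nat \<times> nat) list" where
  "Dpattern i = (if i = 1 then [(1,0),(1,2),(2,3),(3,4),(4,5),(5,6),(6,0)]
     else if i = 2 then [(1,0),(2,1),(2,3),(3,4),(4,5),(5,6),(6,0)]
     else if i = 3 then [(1,0),(1,2),(3,2),(3,4),(4,5),(5,6),(6,0)]
     else if i = 4 then [(1,0),(1,2),(2,3),(4,3),(4,5),(5,6),(6,0)]
     else if i = 5 then [(1,0),(2,1),(3,2),(3,4),(4,5),(5,6),(6,0)]
     else if i = 6 then [(1,0),(2,1),(2,3),(3,4),(5,4),(5,6),(6,0)]
     else if i = 7 then [(1,0),(1,2),(3,2),(3,4),(4,5),(6,5),(6,0)]
     else [(1,0),(2,1),(2,3),(4,3),(4,5),(5,6),(6,0)])"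

lemma Darcs_eq_image_Dpattern:
  assumes "i \<in> {1..8}"
  shows "Darcs i vs = (\<lambda>(p, q). (vs ! p, vs ! q)) ` set (Dpattern i)"
proof -
  have "i = 1 \<or> i = 2 \<or> i = 3 \<or> i = 4 \<or> i = 5 \<or> i = 6 \<or> i = 7 \<or> i = 8"
    using assms by auto
  then show ?thesis by (elim disjE) (simp_all add: Darcs_def Dpattern_def Let_def)
qed

lemma length_Dpattern: "length (Dpattern i) = 7"
  by (simp add: Dpattern_def)

lemma distinct_Dpattern: "distinct (Dpattern i)"
  by (simp add: Dpattern_def)

lemma Dpattern_arc_bounds: "(p, q) \<in> set (Dpattern i) \<Longrightarrow> p < 7 \<and> q < 7 \<and> p \<noteq> q"
  by (simp add: Dpattern_def split: if_splits) auto

lemma Dpattern_cycle_edge: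
  assumes "r < 7"
  shows "(r, Suc r mod 7) \<in> set (Dpattern i) \<or> (Suc r mod 7, r) \<in> set (Dpattern i)"
proof -
  have "r = 0 \<or> r = 1 \<or> r = 2 \<or> r = 3 \<or> r = 4 \<or> r = 5 \<or> r = 6"
    using assms by auto
  then show ?thesis by (elim disjE) (simp_all add: Dpattern_def)
qed

lemma int_eq_if_dvd_diff:
  fixes a b m :: int
  assumes "0 \<le> a" "a < m" "0 \<le> b" "b < m" "m dvd a - b"
  shows "a = b"
  using assms by (metis mod_eq_dvd_iff mod_pos_pos_trivial)

lemma dvd_mult_sign_iff:
  fixes m d \<sigma> :: int
  assumes "\<sigma> \<in> {1, -1}"
  shows "m dvd \<sigma> * d \<longleftrightarrow> m dvd d"
  using assms by auto

lemma nonzero_diff_mod: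
  assumes "x < v" "y < v" "x \<noteq> y"
  shows "(int y - int x) mod int v \<in> {1..<int v}"
proof -
  have "(int y - int x) mod int v \<noteq> 0"
    using assms int_eq_if_dvd_diff[of "int y" "int v" "int x"] by (auto simp: mod_eq_0_iff_dvd)
  moreover have "0 \<le> (int y - int x) mod int v" "(int y - int x) mod int v < int v"
    using assms(1) by simp_all
  ultimately show ?thesis
    by simp
qed

definition affine_mod :: "nat \<Rightarrow> int \<Rightarrow> int \<Rightarrow> int \<Rightarrow> nat" where
  "affine_mod v \<sigma> t x = nat ((\<sigma> * x + t) mod int v)"

lemma int_affine_mod: "0 < v \<Longrightarrow> int (affine_mod v \<sigma> t x) = (\<sigma> * x + t) mod int v"
  by (simp add: affine_mod_def)

lemma affine_mod_translation_unique:
  assumes "t \<in> {0..<int v}" "t' \<in> {0..<int v}"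
    and "affine_mod v \<sigma> t x = affine_mod v \<sigma> t' x"
  shows "t = t'"
proof -
  have "0 < v"
    using assms(1) by simp
  then have "(\<sigma> * x + t) mod int v = (\<sigma> * x + t') mod int v"
    using assms(3) by (metis int_affine_mod)
  then have "int v dvd t - t'"
    by (simp add: mod_eq_dvd_iff)
  then show ?thesis
    using assms(1,2) int_eq_if_dvd_diff by auto
qed

lemma affine_mod_less: "0 < v \<Longrightarrow> affine_mod v \<sigma> t x < v"
  by (simp add: affine_mod_def nat_less_iff)

definition edge_differences :: "int list \<Rightarrow> int list" where
  "edge_differences xs = map (\<lambda>r. xs ! (Suc r mod 7) - xs ! r) [0..<7]"

lemma nth_edge_differences: "r < 7 \<Longrightarrow> edge_differences xs ! r = xs ! (Suc r mod 7) - xs ! r"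
  by (simp add: edge_differences_def)

text \<open>The base cycles \<open>c j\<close> live in \<open>\<int>\<^sub>v\<close>; that every difference \<open>1, \<dots>, 7|J|\<close> is hit only
  once up to sign is not assumed, it follows by counting.\<close>

locale cyclic_7cycle_system =
  fixes v :: nat and J :: "'j set" and c :: "'j \<Rightarrow> int list"
  assumes finite_J: "finite J"
    and v_eq: "v = 14 * card J + 1"
    and length_c: "\<And>j. j \<in> J \<Longrightarrow> length (c j) = 7"
    and distinct_c: "\<And>j. j \<in> J \<Longrightarrow> distinct (c j)"
    and c_range: "\<And>j x. j \<in> J \<Longrightarrow> x \<in> set (c j) \<Longrightarrow> 0 \<le> x \<and> x < int v"
    and edge_differences_cover: "\<And>u. 1 \<le> u \<Longrightarrow> u \<le> 7 * int (card J) \<Longrightarrow>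
      \<exists>j\<in>J. \<exists>r<7. \<exists>\<epsilon>\<in>{1, -1}. (\<epsilon> * edge_differences (c j) ! r) mod int v = u"
begin

lemma v_pos: "0 < v"
  using v_eq by simp

lemma nth_c_range: "j \<in> J \<Longrightarrow> p < 7 \<Longrightarrow> 0 \<le> c j ! p \<and> c j ! p < int v"
  using c_range length_c nth_mem by metis

lemma inj_on_affine_mod:
  assumes "j \<in> J" "\<sigma> \<in> {1, -1}"
  shows "inj_on (affine_mod v \<sigma> t) (set (c j))"
proof (rule inj_onI)
  fix a b assume a: "a \<in> set (c j)" and b: "b \<in> set (c j)"
    and "affine_mod v \<sigma> t a = affine_mod v \<sigma> t b"
  then have "(\<sigma> * a + t) mod int v = (\<sigma> * b + t) mod int v"
    using int_affine_mod[OF v_pos] by metis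
  then have "int v dvd \<sigma> * (a - b)"
    by (simp add: mod_eq_dvd_iff right_diff_distrib)
  then have "int v dvd a - b"
    using dvd_mult_sign_iff[OF assms(2)] by blast
  then show "a = b"
    using int_eq_if_dvd_diff c_range[OF assms(1)] a b by blast
qed

definition arc_difference :: "'j \<Rightarrow> int \<Rightarrow> nat \<times> nat \<Rightarrow> int" where
  "arc_difference j \<sigma> = (\<lambda>(p, q). (\<sigma> * (c j ! q - c j ! p)) mod int v)"

text \<open>A label \<open>(j, \<sigma>, (p, q))\<close> stands for the arc \<open>(v\<^sub>p, v\<^sub>q)\<close> of \<open>D\<^sub>i\<close> laid on the base cycle
  \<open>c j\<close>, reflected by \<open>x \<mapsto> -x\<close> if \<open>\<sigma> = -1\<close>.\<close>

definition arc_labels :: "nat \<Rightarrow> ('j \<times> int \<times> nat \<times> nat) set" where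
  "arc_labels i = J \<times> {1, -1} \<times> set (Dpattern i)"

lemma arc_difference_range:
  assumes "(j, \<sigma>, a) \<in> arc_labels i"
  shows "arc_difference j \<sigma> a \<in> {1..<int v}"
proof -
  obtain p q where a: "a = (p, q)" by fastforce
  have j: "j \<in> J" and \<sigma>: "\<sigma> \<in> {1, -1}" and pq: "p < 7" "q < 7" "p \<noteq> q"
    using assms Dpattern_arc_bounds unfolding arc_labels_def a by auto
  have "c j ! q \<noteq> c j ! p"
    using distinct_c[OF j] length_c[OF j] pq by (simp add: nth_eq_iff_index_eq)
  then have "\<not> int v dvd c j ! q - c j ! p"
    using int_eq_if_dvd_diff nth_c_range[OF j] pq by blast
  then have "\<not> int v dvd \<sigma> * (c j ! q - c j ! p)"
    using dvd_mult_sign_iff[OF \<sigma>] by blast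
  then have "arc_difference j \<sigma> a \<noteq> 0"
    by (simp add: arc_difference_def a mod_eq_0_iff_dvd)
  moreover have "0 \<le> arc_difference j \<sigma> a" "arc_difference j \<sigma> a < int v"
    using v_pos by (simp_all add: arc_difference_def a)
  ultimately show ?thesis
    by simp
qed

lemma arc_difference_onto:
  assumes \<delta>: "\<delta> \<in> {1..<int v}"
  shows "\<delta> \<in> (\<lambda>(j, \<sigma>, a). arc_difference j \<sigma> a) ` arc_labels i"
proof -
  define u where "u = (if \<delta> \<le> 7 * int (card J) then \<delta> else int v - \<delta>)"
  have "1 \<le> u" "u \<le> 7 * int (card J)"
    using \<delta> v_eq unfolding u_def by auto
  then obtain j r \<epsilon> where j: "j \<in> J" and r: "r < 7" and \<epsilon>: "\<epsilon> \<in> {1, -1}"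
    and u: "(\<epsilon> * (c j ! (Suc r mod 7) - c j ! r)) mod int v = u"
    using edge_differences_cover nth_edge_differences by metis
  obtain \<sigma> where \<sigma>: "\<sigma> \<in> {1, -1}" and d: "arc_difference j \<sigma> (r, Suc r mod 7) = \<delta>"
  proof (cases "\<delta> \<le> 7 * int (card J)")
    case True
    then show thesis
      using that[OF \<epsilon>] u unfolding u_def arc_difference_def by simp
  next
    case False
    have "(- \<epsilon> * (c j ! (Suc r mod 7) - c j ! r)) mod int v = (- u) mod int v"
      using u mod_minus_eq by (metis mult_minus_left)
    also have "\<dots> = \<delta>"
      using False \<delta> unfolding u_def by (simp add: zmod_zminus1_eq_if)
    finally show thesis
      using that[of "- \<epsilon>"] \<epsilon> unfolding arc_difference_def by auto
  qed
  have d': "arc_difference j (- \<sigma>) (Suc r mod 7, r) = \<delta>"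
    using d by (simp add: arc_difference_def algebra_simps)
  consider "(r, Suc r mod 7) \<in> set (Dpattern i)" | "(Suc r mod 7, r) \<in> set (Dpattern i)"
    using Dpattern_cycle_edge[OF r] by blast
  then show ?thesis
  proof cases
    case 1
    then have "(j, \<sigma>, r, Suc r mod 7) \<in> arc_labels i"
      using j \<sigma> by (simp add: arc_labels_def)
    then show ?thesis
      using d by force
  next
    case 2
    then have "(j, - \<sigma>, Suc r mod 7, r) \<in> arc_labels i"
      using j \<sigma> by (auto simp: arc_labels_def)
    then show ?thesis
      using d' by force
  qed
qed

lemma inj_on_arc_difference: "inj_on (\<lambda>(j, \<sigma>, a). arc_difference j \<sigma> a) (arc_labels i)"
proof (rule eq_card_imp_inj_on)
  show "finite (arc_labels i)"
    using finite_J by (simp add: arc_labels_def)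
  have "(\<lambda>(j, \<sigma>, a). arc_difference j \<sigma> a) ` arc_labels i = {1..<int v}"
    using arc_difference_range arc_difference_onto by auto
  then show "card ((\<lambda>(j, \<sigma>, a). arc_difference j \<sigma> a) ` arc_labels i) = card (arc_labels i)"
    using v_eq
    by (simp add: arc_labels_def card_cartesian_product distinct_card distinct_Dpattern length_Dpattern)
qed

definition dev_block :: "nat \<Rightarrow> 'j \<Rightarrow> int \<Rightarrow> int \<Rightarrow> (nat \<times> nat) set" where
  "dev_block i j \<sigma> t = Darcs i (map (affine_mod v \<sigma> t) (c j))"

definition dev_blocks :: "nat \<Rightarrow> (nat \<times> nat) set set" where
  "dev_blocks i = {dev_block i j \<sigma> t | j \<sigma> t. j \<in> J \<and> \<sigma> \<in> {1, -1} \<and> t \<in> {0..<int v}}"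

lemma dev_block_eq_image:
  assumes "i \<in> {1..8}" "j \<in> J"
  shows "dev_block i j \<sigma> t =
    (\<lambda>(p, q). (affine_mod v \<sigma> t (c j ! p), affine_mod v \<sigma> t (c j ! q))) ` set (Dpattern i)"
  unfolding dev_block_def Darcs_eq_image_Dpattern[OF assms(1)]
  using Dpattern_arc_bounds length_c[OF assms(2)] by (intro image_cong) auto

lemma dev_block_subset_Kstar:
  assumes "i \<in> {1..8}" "j \<in> J" "\<sigma> \<in> {1, -1}"
  shows "dev_block i j \<sigma> t \<subseteq> Kstar {0..<v}"
proof
  fix z assume "z \<in> dev_block i j \<sigma> t"
  then obtain p q where pq: "(p, q) \<in> set (Dpattern i)"
    and z: "z = (affine_mod v \<sigma> t (c j ! p), affine_mod v \<sigma> t (c j ! q))"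
    using dev_block_eq_image[OF assms(1,2)] by auto
  have "p < 7" "q < 7" "p \<noteq> q"
    using Dpattern_arc_bounds[OF pq] by auto
  then have "c j ! p \<noteq> c j ! q" "c j ! p \<in> set (c j)" "c j ! q \<in> set (c j)"
    using distinct_c[OF assms(2)] length_c[OF assms(2)] by (simp_all add: nth_eq_iff_index_eq)
  then have "affine_mod v \<sigma> t (c j ! p) \<noteq> affine_mod v \<sigma> t (c j ! q)"
    using inj_on_affine_mod[OF assms(2,3)] by (meson inj_onD)
  then show "z \<in> Kstar {0..<v}"
    using z affine_mod_less[OF v_pos] by (simp add: Kstar_def)
qed

lemma is_copy_dev_block:
  assumes "j \<in> J" "\<sigma> \<in> {1, -1}"
  shows "is_copy i (dev_block i j \<sigma> t)"
  unfolding is_copy_def dev_block_def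
  using length_c[OF assms(1)] distinct_c[OF assms(1)] inj_on_affine_mod[OF assms]
  by (intro exI[of _ "map (affine_mod v \<sigma> t) (c j)"]) (simp add: distinct_map)

lemma arc_difference_eq:
  "arc_difference j \<sigma> (p, q) =
    (int (affine_mod v \<sigma> t (c j ! q)) - int (affine_mod v \<sigma> t (c j ! p))) mod int v"
proof -
  have "\<sigma> * (c j ! q - c j ! p) = (\<sigma> * c j ! q + t) - (\<sigma> * c j ! p + t)"
    by (simp add: algebra_simps)
  then show ?thesis
    by (simp add: arc_difference_def int_affine_mod[OF v_pos] mod_diff_eq)
qed

lemma arc_in_dev_block:
  assumes "i \<in> {1..8}" "(x, y) \<in> Kstar {0..<v}"
  shows "\<exists>B \<in> dev_blocks i. (x, y) \<in> B"
proof -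
  have xy: "x < v" "y < v" "x \<noteq> y"
    using assms(2) by (auto simp: Kstar_def)
  then obtain j \<sigma> p q where l: "(j, \<sigma>, p, q) \<in> arc_labels i"
    and d: "arc_difference j \<sigma> (p, q) = (int y - int x) mod int v"
    using arc_difference_onto[OF nonzero_diff_mod[OF xy]] by fastforce
  have j: "j \<in> J" and \<sigma>: "\<sigma> \<in> {1, -1}" and pq: "(p, q) \<in> set (Dpattern i)"
    using l by (auto simp: arc_labels_def)
  define t where "t = (int x - \<sigma> * c j ! p) mod int v"
  have x: "affine_mod v \<sigma> t (c j ! p) = x"
    using xy v_pos by (simp add: affine_mod_def t_def mod_add_right_eq)
  define y' where "y' = affine_mod v \<sigma> t (c j ! q)"
  have "(int y' - int x) mod int v = (int y - int x) mod int v"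
    using d arc_difference_eq[of j \<sigma> p q t] x by (simp add: y'_def)
  then have "int v dvd int y' - int y"
    by (simp add: mod_eq_dvd_iff)
  then have y: "y' = y"
    using xy affine_mod_less[OF v_pos] int_eq_if_dvd_diff[of "int y'" "int v" "int y"]
    by (simp add: y'_def)
  have "(x, y) \<in> dev_block i j \<sigma> t"
    using dev_block_eq_image[OF assms(1) j] pq x y by (force simp: y'_def)
  moreover have "t \<in> {0..<int v}"
    using v_pos by (simp add: t_def)
  then have "dev_block i j \<sigma> t \<in> dev_blocks i"
    using j \<sigma> unfolding dev_blocks_def by blast
  ultimately show ?thesis
    by blast
qed

lemma arc_label_of_dev_block_arc:
  assumes "i \<in> {1..8}" "j \<in> J" "\<sigma> \<in> {1, -1}" "(x, y) \<in> dev_block i j \<sigma> t"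
  obtains p q where "(j, \<sigma>, p, q) \<in> arc_labels i"
    and "arc_difference j \<sigma> (p, q) = (int y - int x) mod int v"
    and "x = affine_mod v \<sigma> t (c j ! p)"
proof -
  obtain p q where "(p, q) \<in> set (Dpattern i)"
    and "x = affine_mod v \<sigma> t (c j ! p)" "y = affine_mod v \<sigma> t (c j ! q)"
    using assms(4) dev_block_eq_image[OF assms(1,2)] by auto
  then show thesis
    using that[of p q] assms(2,3) arc_difference_eq[of j \<sigma> p q t] by (simp add: arc_labels_def)
qed

lemma dev_block_unique:
  assumes i: "i \<in> {1..8}" and B: "B \<in> dev_blocks i" and B': "B' \<in> dev_blocks i"
    and "(x, y) \<in> B" "(x, y) \<in> B'"
  shows "B = B'"
proof -
  obtain j \<sigma> t where j: "j \<in> J" "\<sigma> \<in> {1, -1}" "t \<in> {0..<int v}" and B: "B = dev_block i j \<sigma> t"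
    using B unfolding dev_blocks_def by blast
  obtain j' \<sigma>' t' where j': "j' \<in> J" "\<sigma>' \<in> {1, -1}" "t' \<in> {0..<int v}"
    and B': "B' = dev_block i j' \<sigma>' t'"
    using B' unfolding dev_blocks_def by blast
  obtain p q where l: "(j, \<sigma>, p, q) \<in> arc_labels i"
    and d: "arc_difference j \<sigma> (p, q) = (int y - int x) mod int v"
    and x: "x = affine_mod v \<sigma> t (c j ! p)"
    using arc_label_of_dev_block_arc[OF i j(1,2)] \<open>(x, y) \<in> B\<close> B by metis
  obtain p' q' where l': "(j', \<sigma>', p', q') \<in> arc_labels i"
    and d': "arc_difference j' \<sigma>' (p', q') = (int y - int x) mod int v"
    and x': "x = affine_mod v \<sigma>' t' (c j' ! p')"
    using arc_label_of_dev_block_arc[OF i j'(1,2)] \<open>(x, y) \<in> B'\<close> B' by metis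
  have same: "(j, \<sigma>, p, q) = (j', \<sigma>', p', q')"
    by (rule inj_onD[OF inj_on_arc_difference _ l l']) (simp add: d d')
  then have "affine_mod v \<sigma> t (c j ! p) = affine_mod v \<sigma> t' (c j ! p)"
    using x x' by simp
  with j(3) j'(3) have "t = t'"
    using affine_mod_translation_unique by blast
  then show ?thesis
    using B B' same by simp
qed

lemma is_decomposition_dev_blocks:
  assumes i: "i \<in> {1..8}"
  shows "is_decomposition i (Kstar {0..<v}) (dev_blocks i)"
proof -
  have "B \<subseteq> Kstar {0..<v} \<and> is_copy i B" if B: "B \<in> dev_blocks i" for B
  proof -
    obtain j \<sigma> t where "j \<in> J" "\<sigma> \<in> {1, -1}" and "B = dev_block i j \<sigma> t"
      using B unfolding dev_blocks_def by blast
    then show ?thesis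
      using dev_block_subset_Kstar[OF i] is_copy_dev_block by blast
  qed
  moreover have "\<exists>!B. B \<in> dev_blocks i \<and> e \<in> B" if "e \<in> Kstar {0..<v}" for e
    using that arc_in_dev_block[OF i] dev_block_unique[OF i] by (cases e) blast
  ultimately show ?thesis
    unfolding is_decomposition_def by blast
qed

end

definition base_cycle_A :: "int \<Rightarrow> int \<Rightarrow> int \<Rightarrow> int list" where
  "base_cycle_A h e j = (let k = 2 * h + e in
     [7 * k, 7 * k + 2 * j + 1, 8 * k + 3 * j + 2, 11 * k + h + 4 * j + 3,
      9 * k + h + 3 * j + 2, 5 * k + h + 2 * j + 1, j])"

definition base_cycle_B :: "int \<Rightarrow> int \<Rightarrow> int \<Rightarrow> int list" where
  "base_cycle_B h e j = (let k = 2 * h + e in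
     [8 * k, 8 * k + 2 * j + 2, 7 * k - h - e + j + 1, 4 * k - e,
      k - e - j - 1, 5 * k + h, h - j - 1])"

definition base_cycle :: "int \<Rightarrow> int \<Rightarrow> int \<Rightarrow> int list" where
  "base_cycle h e j = (if j < h + e then base_cycle_A h e j else base_cycle_B h e (j - (h + e)))"

lemma edge_differences_base_cycle_A:
  "edge_differences (base_cycle_A h e j) = (let k = 2 * h + e in
     [2 * j + 1, k + j + 1, 3 * k + h + j + 1, - (2 * k + j + 1),
      - (4 * k + j + 1), - (5 * k + h + j + 1), 7 * k - j])"
  by (simp add: edge_differences_def base_cycle_A_def Let_def upt_rec)

lemma edge_differences_base_cycle_B:
  "edge_differences (base_cycle_B h e j) = (let k = 2 * h + e in
     [2 * j + 2, - (k + h + e + j + 1), - (2 * k + h + e + j + 1), - (3 * k + j + 1),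
      4 * k + h + e + j + 1, - (5 * k + j + 1), 8 * k - h + j + 1])"
  by (simp add: edge_differences_def base_cycle_B_def Let_def upt_rec)

lemma base_cycle_edge_differences_cover:
  assumes h: "0 \<le> h" and e: "e \<in> {0, 1}" and u: "1 \<le> u" "u \<le> 7 * (2 * h + e)"
  shows "\<exists>j\<in>{0..<2 * h + e}. \<exists>r<7. \<exists>\<epsilon>\<in>{1, -1}.
    (\<epsilon> * edge_differences (base_cycle h e j) ! r) mod (14 * (2 * h + e) + 1) = u"
    (is "?covered u")
proof -
  define k where "k = 2 * h + e"
  have A: "?covered u"
    if "0 \<le> j" "j < h + e" "r < 7" "\<epsilon> \<in> {1, -1}"
      "(\<epsilon> * edge_differences (base_cycle_A h e j) ! r) mod (14 * k + 1) = u" for j r \<epsilon>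
    using that h e by (intro bexI[of _ j] exI[of _ r]) (auto simp: base_cycle_def k_def)
  have B: "?covered u"
    if "0 \<le> j" "j < h" "r < 7" "\<epsilon> \<in> {1, -1}"
      "(\<epsilon> * edge_differences (base_cycle_B h e j) ! r) mod (14 * k + 1) = u" for j r \<epsilon>
    using that h e by (intro bexI[of _ "h + e + j"] exI[of _ r]) (auto simp: base_cycle_def k_def)
  note dA = edge_differences_base_cycle_A[of h e, folded k_def, unfolded Let_def]
  note dB = edge_differences_base_cycle_B[of h e, folded k_def, unfolded Let_def]
  have e01: "0 \<le> e" "e \<le> 1"
    using e by auto
  have k: "k = 2 * h + e"
    by (simp add: k_def)
  consider "u \<le> k" | "k < u" "u \<le> k + h + e" | "k + h + e < u" "u \<le> 2 * k"
    | "2 * k < u" "u \<le> 2 * k + h + e" | "2 * k + h + e < u" "u \<le> 3 * k"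
    | "3 * k < u" "u \<le> 3 * k + h" | "3 * k + h < u" "u \<le> 4 * k"
    | "4 * k < u" "u \<le> 4 * k + h + e" | "4 * k + h + e < u" "u \<le> 5 * k"
    | "5 * k < u" "u \<le> 5 * k + h" | "5 * k + h < u" "u \<le> 6 * k"
    | "6 * k < u" "u \<le> 6 * k + h" | "6 * k + h < u" "u \<le> 7 * k"
    using u k by (smt (verit))
  then show ?thesis
  proof cases
    case 1
    show ?thesis
    proof (cases "odd u")
      case True
      then obtain j where "u = 2 * j + 1"
        using oddE by blast
      then show ?thesis
        using A[of j 0 1] 1 u h e01 k by (simp add: dA)
    next
      case False
      then obtain m where "u = 2 * m"
        by blast
      then show ?thesis
        using B[of "m - 1" 0 1] 1 u h e01 k by (simp add: dB)
    qed
  next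
    case 2 then show ?thesis using A[of "u - k - 1" 1 1] u h e01 k by (simp add: dA)
  next
    case 3 then show ?thesis using B[of "u - k - h - e - 1" 1 "-1"] u h e01 k by (simp add: dB)
  next
    case 4 then show ?thesis using A[of "u - 2 * k - 1" 3 "-1"] u h e01 k by (simp add: dA)
  next
    case 5 then show ?thesis using B[of "u - 2 * k - h - e - 1" 2 "-1"] u h e01 k by (simp add: dB)
  next
    case 6 then show ?thesis using B[of "u - 3 * k - 1" 3 "-1"] u h e01 k by (simp add: dB)
  next
    case 7 then show ?thesis using A[of "u - 3 * k - h - 1" 2 1] u h e01 k by (simp add: dA)
  next
    case 8 then show ?thesis using A[of "u - 4 * k - 1" 4 "-1"] u h e01 k by (simp add: dA)
  next
    case 9 then show ?thesis using B[of "u - 4 * k - h - e - 1" 4 1] u h e01 k by (simp add: dB)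
  next
    case 10 then show ?thesis using B[of "u - 5 * k - 1" 5 "-1"] u h e01 k by (simp add: dB)
  next
    case 11 then show ?thesis using A[of "u - 5 * k - h - 1" 5 "-1"] u h e01 k by (simp add: dA)
  next
    case 12 \<comment> \<open>the only edge difference that wraps around modulo \<open>14k + 1\<close>\<close>
    have "- (8 * k - h + (6 * k + h - u) + 1) = u + (-1) * (14 * k + 1)"
      by simp
    then have "(- (8 * k - h + (6 * k + h - u) + 1)) mod (14 * k + 1) = u"
      using 12 u k by (simp only: mod_mult_self1) simp
    then show ?thesis using B[of "6 * k + h - u" 6 "-1"] 12 u h e01 k by (simp add: dB)
  next
    case 13 then show ?thesis using A[of "7 * k - u" 6 1] u h e01 k by (simp add: dA)
  qed
qed

lemma length_base_cycle: "length (base_cycle h e j) = 7"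
  by (simp add: base_cycle_def base_cycle_A_def base_cycle_B_def Let_def)

lemma distinct_base_cycle:
  assumes "0 \<le> h" "e \<in> {0, 1}" "j \<in> {0..<2 * h + e}"
  shows "distinct (base_cycle h e j)"
  using assms by (auto simp: base_cycle_def base_cycle_A_def base_cycle_B_def Let_def)

lemma base_cycle_range:
  assumes "0 \<le> h" "e \<in> {0, 1}" "j \<in> {0..<2 * h + e}" "x \<in> set (base_cycle h e j)"
  shows "0 \<le> x \<and> x < 14 * (2 * h + e) + 1"
  using assms
  by (auto simp: base_cycle_def base_cycle_A_def base_cycle_B_def Let_def split: if_splits)

theorem lemma3p3:
  fixes i v :: nat
  assumes "i \<in> {1..8}" and "v \<ge> 15" and "v mod 14 = 1"
  shows "\<exists>\<D> :: (nat \<times> nat) set set. is_decomposition i (Kstar {0..<v}) \<D>"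
proof -
  define k where "k = v div 14"
  define h e where "h = int (k div 2)" and "e = int (k mod 2)"
  have "v = 14 * k + 1"
    using div_mult_mod_eq[of v 14] assms(3) unfolding k_def by linarith
  moreover have "int k = 2 * h + e"
    using div_mult_mod_eq[of k 2] unfolding h_def e_def by linarith
  ultimately have v: "int v = 14 * (2 * h + e) + 1"
    by simp
  have h: "0 \<le> h" and e: "e \<in> {0, 1}"
    unfolding h_def e_def by auto
  interpret cyclic_7cycle_system v "{0..<2 * h + e}" "base_cycle h e"
  proof
    show "v = 14 * card {0..<2 * h + e} + 1"
      using v by simp
    fix u :: int assume "1 \<le> u" "u \<le> 7 * int (card {0..<2 * h + e})"
    then show "\<exists>j\<in>{0..<2 * h + e}. \<exists>r<7. \<exists>\<epsilon>\<in>{1, -1}.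
      (\<epsilon> * edge_differences (base_cycle h e j) ! r) mod int v = u"
      using base_cycle_edge_differences_cover[OF h e] h e v by simp
  qed (use distinct_base_cycle[OF h e] base_cycle_range[OF h e] length_base_cycle v in simp_all)
  show ?thesis
    using is_decomposition_dev_blocks[OF assms(1)] by blast
qed

end
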